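(* For every $F_{\mathrm{total}}\ge0$, the optimal value of problem (P4) is at least $T^{\lim}=\max\left\{\frac{\sum_{u=1}^U D_u/r_u}{B_{\mathrm{total}}},\ \frac{\sum_{u=1}^U\zeta_uD_u}{R^S_{\mathrm{total}}}\right\}$. Consequently, for any threshold $T^{\mathrm{th}}<T^{\lim}$ there is no choice of $F_{\mathrm{total}}\ge0$ for which problem (P4) has a feasible point with $T\le T^{\mathrm{th}}$; and if $T^{\mathrm{th}}\ge T^{\lim}$, then choosing $F_{\mathrm{total}}=F^{\lim}_{\mathrm{total}}:=\left(\sum_{u=1}^U\rho_uD_u\right)\min\left\{\frac{B_{\mathrm{total}}}{\sum_{u} D_u/r_u},\frac{R^S_{\mathrm{total}}}{\sum_{u}\zeta_uD_u}\right\}$ yields optimal value $T^{\lim}\le T^{\mathrm{th}}$, and every $F_{\mathrm{total}}\ge F^{\lim}_{\mathrm{total}}$ yields exactly the optimal value $T^{\lim}$.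
   Context: Users $u=1,\dots,U$ have constants $D_u>0$, $r_u>0$, $\rho_u>0$, $\zeta_u\in(0,1)$; $B_{\mathrm{total}}>0$, $R^S_{\mathrm{total}}>0$, $F_{\mathrm{total}}\ge0$. Problem (P4): minimize $T$ over $T\ge0$, $B_u\ge0$, $R_u^S\ge0$ ($u=1,\dots,U$) subject to $T\ge\frac{D_u}{B_ur_u}$ for all $u$ (infeasible if $B_u=0$), $\sum_uB_u\le B_{\mathrm{total}}$, $\sum_uR_u^S\le R^S_{\mathrm{total}}$, $\sum_u\rho_u\frac{B_ur_u-R_u^S}{1-\zeta_u}\le F_{\mathrm{total}}$, and $R_u^S\le B_ur_u\le\frac{R_u^S}{\zeta_u}$ for all $u$. *)

theory Defs
  imports Complex_Main
begin

text \<open>A feasible point of problem (P4) with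
  parameter Ftot is a tuple (T, B, RS) satisfying all constraints; B u = 0 is infeasible
  because of the latency constraint T \<ge> D u / (B u * r u).\<close>

definition P4_feasible ::
  "nat \<Rightarrow> (nat \<Rightarrow> real) \<Rightarrow> (nat \<Rightarrow> real) \<Rightarrow> (nat \<Rightarrow> real) \<Rightarrow> (nat \<Rightarrow> real)
   \<Rightarrow> real \<Rightarrow> real \<Rightarrow> real \<Rightarrow> real \<Rightarrow> (nat \<Rightarrow> real) \<Rightarrow> (nat \<Rightarrow> real) \<Rightarrow> bool" where
  "P4_feasible U D r \<rho> \<zeta> Btot Rtot Ftot T B RS \<longleftrightarrow>
     T \<ge> 0 \<and>
     (\<forall>u\<in>{1..U}. B u > 0 \<and> RS u \<ge> 0 \<and> T \<ge> D u / (B u * r u)) \<and>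
     (\<Sum>u=1..U. B u) \<le> Btot \<and>
     (\<Sum>u=1..U. RS u) \<le> Rtot \<and>
     (\<Sum>u=1..U. \<rho> u * (B u * r u - RS u) / (1 - \<zeta> u)) \<le> Ftot \<and>
     (\<forall>u\<in>{1..U}. RS u \<le> B u * r u \<and> B u * r u \<le> RS u / \<zeta> u)"

definition P4_optval ::
  "nat \<Rightarrow> (nat \<Rightarrow> real) \<Rightarrow> (nat \<Rightarrow> real) \<Rightarrow> (nat \<Rightarrow> real) \<Rightarrow> (nat \<Rightarrow> real)
   \<Rightarrow> real \<Rightarrow> real \<Rightarrow> real \<Rightarrow> real" where
  "P4_optval U D r \<rho> \<zeta> Btot Rtot Ftot =
     Inf {T. \<exists>B RS. P4_feasible U D r \<rho> \<zeta> Btot Rtot Ftot T B RS}"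

definition T_lim :: "nat \<Rightarrow> (nat \<Rightarrow> real) \<Rightarrow> (nat \<Rightarrow> real) \<Rightarrow> (nat \<Rightarrow> real) \<Rightarrow> real \<Rightarrow> real \<Rightarrow> real" where
  "T_lim U D r \<zeta> Btot Rtot =
     max ((\<Sum>u=1..U. D u / r u) / Btot) ((\<Sum>u=1..U. \<zeta> u * D u) / Rtot)"

definition F_lim :: "nat \<Rightarrow> (nat \<Rightarrow> real) \<Rightarrow> (nat \<Rightarrow> real) \<Rightarrow> (nat \<Rightarrow> real) \<Rightarrow> (nat \<Rightarrow> real)
   \<Rightarrow> real \<Rightarrow> real \<Rightarrow> real" where
  "F_lim U D r \<rho> \<zeta> Btot Rtot =
     (\<Sum>u=1..U. \<rho> u * D u) *
       min (Btot / (\<Sum>u=1..U. D u / r u)) (Rtot / (\<Sum>u=1..U. \<zeta> u * D u))"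

end

theory Submission
  imports Defs
begin

text \<open>A feasible point forces \<open>D u / r u \<le> T B u\<close> (latency) and \<open>\<zeta> u D u \<le> T RS u\<close>
  (latency combined with \<open>\<zeta> u B u r u \<le> RS u\<close>); summing against the two budgets gives
  \<open>T \<ge> T_lim\<close>. Conversely, at \<open>T = T_lim\<close> the allocation \<open>B u = D u / (r u T)\<close>,
  \<open>RS u = \<zeta> u D u / T\<close> meets both budgets and needs fronthaul capacity exactly
  \<open>\<Sum> \<rho> u D u / T_lim = F_lim\<close>; choosing \<open>RS u = B u r u\<close> instead needs no fronthaul at all,
  so for every \<open>Ftot \<ge> 0\<close> the feasible set is nonempty and the infimum is well behaved.\<close>

lemma user_demand_le_allocation:
  fixes D r \<zeta> B RS T :: real
  assumes "B > 0" "r > 0" "\<zeta> > 0" "T \<ge> 0"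
    and latency: "D / (B * r) \<le> T" and split: "B * r \<le> RS / \<zeta>"
  shows "D / r \<le> T * B" and "\<zeta> * D \<le> T * RS"
proof -
  have D_le: "D \<le> T * (B * r)"
    using latency \<open>B > 0\<close> \<open>r > 0\<close> by (simp add: divide_le_eq)
  then show "D / r \<le> T * B"
    using \<open>r > 0\<close> by (simp add: divide_le_eq mult.assoc)
  have "\<zeta> * (B * r) \<le> RS"
    using split \<open>\<zeta> > 0\<close> by (simp add: le_divide_eq mult.commute)
  then have "T * (\<zeta> * (B * r)) \<le> T * RS"
    using \<open>T \<ge> 0\<close> by (rule mult_left_mono)
  moreover have "\<zeta> * D \<le> \<zeta> * (T * (B * r))"
    using D_le \<open>\<zeta> > 0\<close> by simp
  ultimately show "\<zeta> * D \<le> T * RS"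
    by (simp add: algebra_simps)
qed

lemma P4_feasible_imp_T_lim_le:
  assumes r: "\<And>u. u \<in> {1..U} \<Longrightarrow> r u > 0"
    and \<zeta>: "\<And>u. u \<in> {1..U} \<Longrightarrow> \<zeta> u > 0"
    and "Btot > 0" "Rtot > 0"
    and feasible: "P4_feasible U D r \<rho> \<zeta> Btot Rtot Ftot T B RS"
  shows "T_lim U D r \<zeta> Btot Rtot \<le> T"
proof -
  have "T \<ge> 0"
    and user: "\<And>u. u \<in> {1..U} \<Longrightarrow> B u > 0 \<and> D u / (B u * r u) \<le> T \<and> B u * r u \<le> RS u / \<zeta> u"
    and B_budget: "(\<Sum>u=1..U. B u) \<le> Btot"
    and RS_budget: "(\<Sum>u=1..U. RS u) \<le> Rtot"
    using feasible unfolding P4_feasible_def by auto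
  note demand = user_demand_le_allocation[OF _ r \<zeta> \<open>T \<ge> 0\<close>]
  have "(\<Sum>u=1..U. D u / r u) \<le> (\<Sum>u=1..U. T * B u)"
    by (intro sum_mono) (use demand(1) user in blast)
  also have "\<dots> \<le> T * Btot"
    using B_budget \<open>T \<ge> 0\<close> by (simp add: sum_distrib_left[symmetric] mult_left_mono)
  finally have bandwidth: "(\<Sum>u=1..U. D u / r u) / Btot \<le> T"
    using \<open>Btot > 0\<close> by (simp add: divide_le_eq)
  have "(\<Sum>u=1..U. \<zeta> u * D u) \<le> (\<Sum>u=1..U. T * RS u)"
    by (intro sum_mono) (use demand(2) user in blast)
  also have "\<dots> \<le> T * Rtot"
    using RS_budget \<open>T \<ge> 0\<close> by (simp add: sum_distrib_left[symmetric] mult_left_mono)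
  finally have storage: "(\<Sum>u=1..U. \<zeta> u * D u) / Rtot \<le> T"
    using \<open>Rtot > 0\<close> by (simp add: divide_le_eq)
  show ?thesis
    unfolding T_lim_def using bandwidth storage by simp
qed

text \<open>The fraction \<open>c u\<close> of user \<open>u\<close>'s traffic that is served by \<open>RS\<close> interpolates between
  the extremes \<open>c u = \<zeta> u\<close> (least storage, most fronthaul) and \<open>c u = 1\<close> (no fronthaul).\<close>

lemma P4_feasible_proportional:
  fixes c :: "nat \<Rightarrow> real"
  assumes D: "\<And>u. u \<in> {1..U} \<Longrightarrow> D u > 0"
    and r: "\<And>u. u \<in> {1..U} \<Longrightarrow> r u > 0"
    and \<zeta>: "\<And>u. u \<in> {1..U} \<Longrightarrow> 0 < \<zeta> u \<and> \<zeta> u < 1"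
    and c: "\<And>u. u \<in> {1..U} \<Longrightarrow> \<zeta> u \<le> c u \<and> c u \<le> 1"
    and "T > 0"
    and B_budget: "(\<Sum>u=1..U. D u / r u) \<le> T * Btot"
    and RS_budget: "(\<Sum>u=1..U. c u * D u) \<le> T * Rtot"
    and F_budget: "(\<Sum>u=1..U. \<rho> u * (1 - c u) * D u / (1 - \<zeta> u)) / T \<le> Ftot"
  shows "P4_feasible U D r \<rho> \<zeta> Btot Rtot Ftot T (\<lambda>u. D u / (r u * T)) (\<lambda>u. c u * D u / T)"
proof -
  have served: "D u / (r u * T) * r u = D u / T" if "u \<in> {1..U}" for u
    using r[OF that] \<open>T > 0\<close> by (simp add: field_simps)
  have user: "D u / (r u * T) > 0 \<and> c u * D u / T \<ge> 0 \<and> D u / (D u / (r u * T) * r u) \<le> T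
      \<and> c u * D u / T \<le> D u / (r u * T) * r u \<and> D u / (r u * T) * r u \<le> c u * D u / T / \<zeta> u"
    if u: "u \<in> {1..U}" for u
  proof -
    have "c u * D u / T \<le> D u / T" and "\<zeta> u * (D u / T) \<le> c u * D u / T"
      using c[OF u] D[OF u] \<open>T > 0\<close> by (simp_all add: divide_right_mono mult_right_mono)
    then show ?thesis
      unfolding served[OF u] using D[OF u] r[OF u] \<zeta>[OF u] c[OF u] \<open>T > 0\<close>
      by (simp add: le_divide_eq mult.commute)
  qed
  have "(\<Sum>u=1..U. D u / (r u * T)) = (\<Sum>u=1..U. D u / r u) / T"
    by (simp add: sum_divide_distrib)
  also have "\<dots> \<le> Btot"
    using B_budget \<open>T > 0\<close> by (simp add: divide_le_eq mult.commute)
  finally have B_ok: "(\<Sum>u=1..U. D u / (r u * T)) \<le> Btot" .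
  have "(\<Sum>u=1..U. c u * D u / T) = (\<Sum>u=1..U. c u * D u) / T"
    by (simp add: sum_divide_distrib)
  also have "\<dots> \<le> Rtot"
    using RS_budget \<open>T > 0\<close> by (simp add: divide_le_eq mult.commute)
  finally have RS_ok: "(\<Sum>u=1..U. c u * D u / T) \<le> Rtot" .
  have "(\<Sum>u=1..U. \<rho> u * (D u / (r u * T) * r u - c u * D u / T) / (1 - \<zeta> u))
      = (\<Sum>u=1..U. \<rho> u * (1 - c u) * D u / (1 - \<zeta> u) / T)"
  proof (intro sum.cong refl)
    fix u assume u: "u \<in> {1..U}"
    have "1 - \<zeta> u \<noteq> 0" using \<zeta>[OF u] by simp
    then show "\<rho> u * (D u / (r u * T) * r u - c u * D u / T) / (1 - \<zeta> u)
        = \<rho> u * (1 - c u) * D u / (1 - \<zeta> u) / T"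
      using \<open>T > 0\<close> r[OF u] by (simp add: served[OF u] field_simps)
  qed
  also have "\<dots> \<le> Ftot"
    using F_budget by (simp only: sum_divide_distrib[symmetric])
  finally have F_ok: "(\<Sum>u=1..U. \<rho> u * (D u / (r u * T) * r u - c u * D u / T) / (1 - \<zeta> u)) \<le> Ftot" .
  show ?thesis
    unfolding P4_feasible_def using \<open>T > 0\<close> user B_ok RS_ok F_ok by auto
qed

lemma P4_feasible_exists:
  assumes D: "\<And>u. u \<in> {1..U} \<Longrightarrow> D u > 0"
    and r: "\<And>u. u \<in> {1..U} \<Longrightarrow> r u > 0"
    and \<zeta>: "\<And>u. u \<in> {1..U} \<Longrightarrow> 0 < \<zeta> u \<and> \<zeta> u < 1"
    and "Btot > 0" "Rtot > 0" "Ftot \<ge> 0"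
  shows "\<exists>T B RS. P4_feasible U D r \<rho> \<zeta> Btot Rtot Ftot T B RS"
proof -
  define T where "T = max 1 (max ((\<Sum>u=1..U. D u / r u) / Btot) ((\<Sum>u=1..U. 1 * D u) / Rtot))"
  have "(\<Sum>u=1..U. D u / r u) / Btot \<le> T" "(\<Sum>u=1..U. 1 * D u) / Rtot \<le> T"
    unfolding T_def by auto
  then have "(\<Sum>u=1..U. D u / r u) \<le> T * Btot" "(\<Sum>u=1..U. 1 * D u) \<le> T * Rtot"
    using \<open>Btot > 0\<close> \<open>Rtot > 0\<close> by (simp_all only: pos_divide_le_eq)
  moreover have "T > 0"
    unfolding T_def by simp
  ultimately have "P4_feasible U D r \<rho> \<zeta> Btot Rtot Ftot T (\<lambda>u. D u / (r u * T)) (\<lambda>u. 1 * D u / T)"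
    by (intro P4_feasible_proportional[OF D r \<zeta>]) (auto simp: less_imp_le \<zeta> \<open>Ftot \<ge> 0\<close>)
  then show ?thesis by blast
qed

lemma min_inverse_eq_inverse_max:
  fixes a b :: "'a :: linordered_field"
  assumes "a > 0" "b > 0"
  shows "min (inverse a) (inverse b) = inverse (max a b)"
  using assms by (cases "a \<le> b") (auto simp: min_def max_def)

lemma F_lim_eq_div_T_lim:
  assumes "(\<Sum>u=1..U. D u / r u) > 0" "(\<Sum>u=1..U. \<zeta> u * D u) > 0" "Btot > 0" "Rtot > 0"
  shows "F_lim U D r \<rho> \<zeta> Btot Rtot = (\<Sum>u=1..U. \<rho> u * D u) / T_lim U D r \<zeta> Btot Rtot"
proof -
  have "min (Btot / (\<Sum>u=1..U. D u / r u)) (Rtot / (\<Sum>u=1..U. \<zeta> u * D u))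
      = inverse (T_lim U D r \<zeta> Btot Rtot)"
    using min_inverse_eq_inverse_max[of "(\<Sum>u=1..U. D u / r u) / Btot"
        "(\<Sum>u=1..U. \<zeta> u * D u) / Rtot"] assms
    by (simp add: T_lim_def)
  then show ?thesis
    by (simp add: F_lim_def divide_inverse)
qed

lemma P4_feasible_at_T_lim:
  assumes "U \<ge> 1"
    and D: "\<And>u. u \<in> {1..U} \<Longrightarrow> D u > 0"
    and r: "\<And>u. u \<in> {1..U} \<Longrightarrow> r u > 0"
    and \<zeta>: "\<And>u. u \<in> {1..U} \<Longrightarrow> 0 < \<zeta> u \<and> \<zeta> u < 1"
    and "Btot > 0" "Rtot > 0"
    and F: "Ftot \<ge> F_lim U D r \<rho> \<zeta> Btot Rtot"
  shows "\<exists>B RS. P4_feasible U D r \<rho> \<zeta> Btot Rtot Ftot (T_lim U D r \<zeta> Btot Rtot) B RS"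
proof -
  let ?T = "T_lim U D r \<zeta> Btot Rtot"
  have "1 \<in> {1..U}" using \<open>U \<ge> 1\<close> by simp
  then have bandwidth_pos: "(\<Sum>u=1..U. D u / r u) > 0" and storage_pos: "(\<Sum>u=1..U. \<zeta> u * D u) > 0"
    by (auto intro!: sum_pos simp: D r \<zeta>)
  have "(\<Sum>u=1..U. D u / r u) / Btot \<le> ?T" "(\<Sum>u=1..U. \<zeta> u * D u) / Rtot \<le> ?T"
    unfolding T_lim_def by auto
  then have bounds: "(\<Sum>u=1..U. D u / r u) \<le> ?T * Btot" "(\<Sum>u=1..U. \<zeta> u * D u) \<le> ?T * Rtot"
    using \<open>Btot > 0\<close> \<open>Rtot > 0\<close> by (simp_all only: pos_divide_le_eq)
  have "?T > 0"
    using bandwidth_pos \<open>Btot > 0\<close> by (simp add: T_lim_def less_max_iff_disj)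
  have "(\<Sum>u=1..U. \<rho> u * (1 - \<zeta> u) * D u / (1 - \<zeta> u)) = (\<Sum>u=1..U. \<rho> u * D u)"
    by (intro sum.cong refl) (use \<zeta> in fastforce)
  then have F_budget: "(\<Sum>u=1..U. \<rho> u * (1 - \<zeta> u) * D u / (1 - \<zeta> u)) / ?T \<le> Ftot"
    using F F_lim_eq_div_T_lim[OF bandwidth_pos storage_pos \<open>Btot > 0\<close> \<open>Rtot > 0\<close>] by simp
  have "\<zeta> u \<le> \<zeta> u \<and> \<zeta> u \<le> 1" if "u \<in> {1..U}" for u
    using \<zeta>[OF that] by simp
  then show ?thesis
    using P4_feasible_proportional[OF D r \<zeta> _ \<open>?T > 0\<close> bounds F_budget] by blast
qed

lemma P4_optval_ge_T_lim:
  assumes D: "\<And>u. u \<in> {1..U} \<Longrightarrow> D u > 0"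
    and r: "\<And>u. u \<in> {1..U} \<Longrightarrow> r u > 0"
    and \<zeta>: "\<And>u. u \<in> {1..U} \<Longrightarrow> 0 < \<zeta> u \<and> \<zeta> u < 1"
    and "Btot > 0" "Rtot > 0" "Ftot \<ge> 0"
  shows "T_lim U D r \<zeta> Btot Rtot \<le> P4_optval U D r \<rho> \<zeta> Btot Rtot Ftot"
  unfolding P4_optval_def
proof (rule cInf_greatest)
  show "{T. \<exists>B RS. P4_feasible U D r \<rho> \<zeta> Btot Rtot Ftot T B RS} \<noteq> {}"
    using P4_feasible_exists[OF D r \<zeta> \<open>Btot > 0\<close> \<open>Rtot > 0\<close> \<open>Ftot \<ge> 0\<close>] by simp
next
  fix T assume "T \<in> {T. \<exists>B RS. P4_feasible U D r \<rho> \<zeta> Btot Rtot Ftot T B RS}"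
  then obtain B RS where feasible: "P4_feasible U D r \<rho> \<zeta> Btot Rtot Ftot T B RS" by blast
  show "T_lim U D r \<zeta> Btot Rtot \<le> T"
    using P4_feasible_imp_T_lim_le[OF r _ \<open>Btot > 0\<close> \<open>Rtot > 0\<close> feasible] \<zeta> by blast
qed

lemma P4_optval_eq_T_lim:
  assumes "U \<ge> 1"
    and D: "\<And>u. u \<in> {1..U} \<Longrightarrow> D u > 0"
    and r: "\<And>u. u \<in> {1..U} \<Longrightarrow> r u > 0"
    and \<zeta>: "\<And>u. u \<in> {1..U} \<Longrightarrow> 0 < \<zeta> u \<and> \<zeta> u < 1"
    and "Btot > 0" "Rtot > 0"
    and "Ftot \<ge> F_lim U D r \<rho> \<zeta> Btot Rtot"
  shows "P4_optval U D r \<rho> \<zeta> Btot Rtot Ftot = T_lim U D r \<zeta> Btot Rtot"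
  unfolding P4_optval_def
proof (rule cInf_eq_minimum)
  show "T_lim U D r \<zeta> Btot Rtot \<in> {T. \<exists>B RS. P4_feasible U D r \<rho> \<zeta> Btot Rtot Ftot T B RS}"
    using P4_feasible_at_T_lim[OF assms] by simp
next
  fix T assume "T \<in> {T. \<exists>B RS. P4_feasible U D r \<rho> \<zeta> Btot Rtot Ftot T B RS}"
  then obtain B RS where feasible: "P4_feasible U D r \<rho> \<zeta> Btot Rtot Ftot T B RS" by blast
  show "T_lim U D r \<zeta> Btot Rtot \<le> T"
    using P4_feasible_imp_T_lim_le[OF r _ \<open>Btot > 0\<close> \<open>Rtot > 0\<close> feasible] \<zeta> by blast
qed

lemma F_lim_nonneg:
  assumes "\<And>u. u \<in> {1..U} \<Longrightarrow> D u > 0" "\<And>u. u \<in> {1..U} \<Longrightarrow> r u > 0"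
    and "\<And>u. u \<in> {1..U} \<Longrightarrow> \<rho> u > 0" "\<And>u. u \<in> {1..U} \<Longrightarrow> \<zeta> u > 0"
    and "Btot > 0" "Rtot > 0"
  shows "F_lim U D r \<rho> \<zeta> Btot Rtot \<ge> 0"
  unfolding F_lim_def using assms
  by (intro mult_nonneg_nonneg min.boundedI divide_nonneg_nonneg sum_nonneg) (auto simp: less_imp_le)

theorem mainTheorem7:
  fixes U :: nat and D r \<rho> \<zeta> :: "nat \<Rightarrow> real" and Btot Rtot :: real
  assumes "U \<ge> 1"
    and "\<And>u. u \<in> {1..U} \<Longrightarrow> D u > 0"
    and "\<And>u. u \<in> {1..U} \<Longrightarrow> r u > 0"
    and "\<And>u. u \<in> {1..U} \<Longrightarrow> \<rho> u > 0"
    and "\<And>u. u \<in> {1..U} \<Longrightarrow> 0 < \<zeta> u \<and> \<zeta> u < 1"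
    and "Btot > 0" and "Rtot > 0"
  shows "(\<forall>Ftot \<ge> 0. P4_optval U D r \<rho> \<zeta> Btot Rtot Ftot \<ge> T_lim U D r \<zeta> Btot Rtot)
    \<and> (\<forall>Tth. Tth < T_lim U D r \<zeta> Btot Rtot \<longrightarrow>
          \<not> (\<exists>Ftot \<ge> 0. \<exists>T B RS. P4_feasible U D r \<rho> \<zeta> Btot Rtot Ftot T B RS \<and> T \<le> Tth))
    \<and> (\<forall>Tth. Tth \<ge> T_lim U D r \<zeta> Btot Rtot \<longrightarrow>
          F_lim U D r \<rho> \<zeta> Btot Rtot \<ge> 0 \<and>
          P4_optval U D r \<rho> \<zeta> Btot Rtot (F_lim U D r \<rho> \<zeta> Btot Rtot) = T_lim U D r \<zeta> Btot Rtot \<and>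
          T_lim U D r \<zeta> Btot Rtot \<le> Tth \<and>
          (\<forall>Ftot \<ge> F_lim U D r \<rho> \<zeta> Btot Rtot.
              P4_optval U D r \<rho> \<zeta> Btot Rtot Ftot = T_lim U D r \<zeta> Btot Rtot))"
proof -
  let ?T_lim = "T_lim U D r \<zeta> Btot Rtot" and ?F_lim = "F_lim U D r \<rho> \<zeta> Btot Rtot"
  have no_feasible_below: "\<not> (\<exists>Ftot \<ge> 0. \<exists>T B RS. P4_feasible U D r \<rho> \<zeta> Btot Rtot Ftot T B RS \<and> T \<le> Tth)"
    if "Tth < ?T_lim" for Tth
  proof clarify
    fix Ftot T B RS assume "P4_feasible U D r \<rho> \<zeta> Btot Rtot Ftot T B RS" "T \<le> Tth"
    moreover have "?T_lim \<le> T"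
      using P4_feasible_imp_T_lim_le[OF assms(3) _ assms(6,7) \<open>P4_feasible U D r \<rho> \<zeta> Btot Rtot Ftot T B RS\<close>]
        assms(5) by blast
    ultimately show False using that by simp
  qed
  have "?F_lim \<ge> 0"
    by (rule F_lim_nonneg) (simp_all add: assms)
  then show ?thesis
    using P4_optval_ge_T_lim[OF assms(2,3,5,6,7)] P4_optval_eq_T_lim[OF assms(1,2,3,5,6,7)]
      no_feasible_below by auto
qed

end
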